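(* Let $A \in \mathbb{Z}^{(n-2)\times n}$ be an integer matrix of rank $n-2$ with $\ker_{\mathbb{Z}} A \cap \mathbb{N}^n = \{0\}$, let $B$ be a Gale transform of $A$ whose rows $b_1,\dots,b_n$ are all nonzero, and let $\tilde B = \{\tilde b_1,\dots,\tilde b_n\} \subseteq \mathbb{Z}^2$ be the reduced Gale transform of $A$. If the toric ideal $I_A$ is strongly robust, then $\mathrm{conv}(\tilde B)$ is a two-dimensional polygon that is centrally symmetric about the origin, i.e. $\mathrm{conv}(\tilde B) = -\mathrm{conv}(\tilde B)$; equivalently, for every vertex $v$ of $\mathrm{conv}(\tilde B)$, $-v$ is also a vertex.
   Context: For $A \in \mathbb{Z}^{d\times n}$ of rank $d$, the toric ideal is $I_A = \langle p^u - p^v : u,v\in\mathbb{N}^n,\ Au = Av\rangle \subseteq \mathbb{K}[p_1,\dots,p_n]$, where $p^u=\prod_i p_i^{u_i}$. For $u \in \mathbb{N}^n$, its fiber is $\mathcal{F}(u)=\{v\in\mathbb{N}^n : Av = Au\}$. A binomial $p^u - p^v$ is indispensable if $\mathcal{F}(u)=\{u,v\}$ and $\mathrm{supp}(u)\cap\mathrm{supp}(v)=\emptyset$ (where $\mathrm{supp}(u)=\{i : u_i\neq 0\}$); the set of indispensable binomials is $\mathcal{S}(A)$. A binomial $p^u-p^v\in I_A$ is primitive if there is no other binomial $p^{u'}-p^{v'}\in I_A$ with $p^{u'}\mid p^u$ and $p^{v'}\mid p^v$; the Graver basis $\mathcal{G}r(A)$ is the set of primitive binomials of $I_A$. $I_A$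 is strongly robust if $\mathcal{S}(A)=\mathcal{G}r(A)$. A Gale transform of $A$ (rank $n-2$) is an $n\times 2$ integer matrix $B$ whose columns form a basis of the lattice $\ker_{\mathbb{Z}}A$; write its rows as $b_i=(b_{i1},b_{i2})$. The reduced Gale transform is $\tilde B=\{\tilde b_1,\dots,\tilde b_n\}$ with $\tilde b_i = \gcd(b_{i1},b_{i2})^{-1}(-b_{i2},b_{i1})$, i.e. each row rotated by $90^\circ$ and divided by the gcd of its entries. *)

theory Defs
  imports "HOL-Analysis.Analysis"
begin

text \<open>An integer matrix A with m rows and n columns is a function
  A :: nat => nat => int, entry A i j for i < m, j < n.  Integer vectors of length n are
  functions nat => int of which only the indices < n matter; vectors in N^n are functions
  nat => nat vanishing outside {0..<n}.  A binomial p^u - p^v is represented by the pair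
  (u, v) of exponent vectors, with u ~= v (so that the binomial is nonzero and the pair
  determines the binomial).\<close>

definition matvec :: "nat \<Rightarrow> (nat \<Rightarrow> nat \<Rightarrow> int) \<Rightarrow> (nat \<Rightarrow> int) \<Rightarrow> nat \<Rightarrow> int" where
  "matvec n A x i = (\<Sum>j<n. A i j * x j)"

definition full_row_rank :: "nat \<Rightarrow> nat \<Rightarrow> (nat \<Rightarrow> nat \<Rightarrow> int) \<Rightarrow> bool" where
  "full_row_rank m n A \<longleftrightarrow>
     (\<forall>c :: nat \<Rightarrow> rat. (\<forall>j<n. (\<Sum>i<m. c i * of_int (A i j)) = 0) \<longrightarrow> (\<forall>i<m. c i = 0))"

definition natvecs :: "nat \<Rightarrow> (nat \<Rightarrow> nat) set" where
  "natvecs n = {u. \<forall>j\<ge>n. u j = 0}"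

definition fiber :: "nat \<Rightarrow> nat \<Rightarrow> (nat \<Rightarrow> nat \<Rightarrow> int) \<Rightarrow> (nat \<Rightarrow> nat) \<Rightarrow> (nat \<Rightarrow> nat) set" where
  "fiber m n A u = {v \<in> natvecs n.
      \<forall>i<m. matvec n A (\<lambda>j. int (v j)) i = matvec n A (\<lambda>j. int (u j)) i}"

text \<open>p^u - p^v is a (nonzero) binomial of I_A.\<close>
definition toric_binomial :: "nat \<Rightarrow> nat \<Rightarrow> (nat \<Rightarrow> nat \<Rightarrow> int) \<Rightarrow> (nat \<Rightarrow> nat) \<Rightarrow> (nat \<Rightarrow> nat) \<Rightarrow> bool" where
  "toric_binomial m n A u v \<longleftrightarrow> u \<in> natvecs n \<and> u \<noteq> v \<and> v \<in> fiber m n A u"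

definition indispensables :: "nat \<Rightarrow> nat \<Rightarrow> (nat \<Rightarrow> nat \<Rightarrow> int) \<Rightarrow> ((nat \<Rightarrow> nat) \<times> (nat \<Rightarrow> nat)) set" where
  "indispensables m n A = {(u, v). toric_binomial m n A u v \<and> fiber m n A u = {u, v}
       \<and> {j. u j \<noteq> 0} \<inter> {j. v j \<noteq> 0} = {}}"

text \<open>Primitive: no other binomial p^u' - p^v' of I_A with p^u' | p^u and p^v' | p^v
  (divisibility of monomials = componentwise order of exponents).\<close>
definition graver :: "nat \<Rightarrow> nat \<Rightarrow> (nat \<Rightarrow> nat \<Rightarrow> int) \<Rightarrow> ((nat \<Rightarrow> nat) \<times> (nat \<Rightarrow> nat)) set" where
  "graver m n A = {(u, v). toric_binomial m n A u v \<and>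
      \<not> (\<exists>u' v'. (u', v') \<noteq> (u, v) \<and> toric_binomial m n A u' v' \<and> u' \<le> u \<and> v' \<le> v)}"

definition strongly_robust :: "nat \<Rightarrow> nat \<Rightarrow> (nat \<Rightarrow> nat \<Rightarrow> int) \<Rightarrow> bool" where
  "strongly_robust m n A \<longleftrightarrow> indispensables m n A = graver m n A"

definition gale_transform :: "nat \<Rightarrow> nat \<Rightarrow> (nat \<Rightarrow> nat \<Rightarrow> int) \<Rightarrow> (nat \<Rightarrow> int \<times> int) \<Rightarrow> bool" where
  "gale_transform m n A b \<longleftrightarrow>
     (\<forall>i<m. matvec n A (\<lambda>j. fst (b j)) i = 0) \<and>
     (\<forall>i<m. matvec n A (\<lambda>j. snd (b j)) i = 0) \<and>
     (\<forall>x :: nat \<Rightarrow> int. (\<forall>i<m. matvec n A x i = 0) \<longrightarrow>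
        (\<exists>k1 k2 :: int. \<forall>j<n. x j = k1 * fst (b j) + k2 * snd (b j))) \<and>
     (\<forall>k1 k2 :: int. (\<forall>j<n. k1 * fst (b j) + k2 * snd (b j) = 0) \<longrightarrow> k1 = 0 \<and> k2 = 0)"

text \<open>Reduced Gale vector: row rotated by 90 degrees and divided by the gcd of its entries,
  viewed as a point of R^2.\<close>
definition reduced_gale :: "int \<times> int \<Rightarrow> real \<times> real" where
  "reduced_gale p = (let g = gcd (fst p) (snd p) in
      (real_of_int (- snd p div g), real_of_int (fst p div g)))"

end

theory Submission
  imports Defs
begin

text \<open>Fix a row index i and write \<beta> i = (p, q) for the primitive vector in the direction
  of the row b i.  The Gale coordinates (-q, p) describe a kernel vector c of A vanishing at i,
  and every kernel vector vanishing at i is an integer multiple of c.  Hence the binomial of c is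
  primitive, so by strong robustness it is indispensable: the fiber of the positive part of c
  consists of the positive and the negative part of c only.  In Gale coordinates this says that
  no lattice point y \<notin> {0, c} satisfies y \<bullet> b l \<le> max (c \<bullet> b l) 0 for all l.  Testing this on
  the lattice points y with y \<bullet> \<beta> i = -1 produces rows \<beta> l, \<beta> l' and weights \<alpha>, \<alpha>' \<ge> 0
  with \<alpha> \<beta> l + \<alpha>' \<beta> l' = -E \<beta> i and E \<ge> \<alpha> + \<alpha>', so the reflection of every reduced Gale
  vector lies in their convex hull.  The hull is two-dimensional because the rows of a Gale
  transform are not all parallel.\<close>

definition gale_vec :: "(nat \<Rightarrow> int \<times> int) \<Rightarrow> int \<times> int \<Rightarrow> nat \<Rightarrow> int" where
  "gale_vec b w j = fst w * fst (b j) + snd w * snd (b j)"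

definition pos_part :: "nat \<Rightarrow> (nat \<Rightarrow> int) \<Rightarrow> nat \<Rightarrow> nat" where
  "pos_part n x j = (if j < n then nat (x j) else 0)"

definition neg_part :: "nat \<Rightarrow> (nat \<Rightarrow> int) \<Rightarrow> nat \<Rightarrow> nat" where
  "neg_part n x j = (if j < n then nat (- x j) else 0)"

lemma pos_part_natvecs [simp]: "pos_part n x \<in> natvecs n"
  and neg_part_natvecs [simp]: "neg_part n x \<in> natvecs n"
  unfolding natvecs_def pos_part_def neg_part_def by auto

lemma pos_part_minus_neg_part: "j < n \<Longrightarrow> int (pos_part n x j) - int (neg_part n x j) = x j"
  unfolding pos_part_def neg_part_def by auto

lemma matvec_diff: "matvec n A (\<lambda>j. f j - g j) i = matvec n A f i - matvec n A g i"
  unfolding matvec_def by (simp add: right_diff_distrib sum_subtractf)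

lemma matvec_cong: "(\<And>j. j < n \<Longrightarrow> f j = g j) \<Longrightarrow> matvec n A f i = matvec n A g i"
  unfolding matvec_def by (rule sum.cong) auto

lemma mem_fiber_iff:
  "v \<in> fiber m n A u \<longleftrightarrow>
     v \<in> natvecs n \<and> (\<forall>i<m. matvec n A (\<lambda>j. int (u j) - int (v j)) i = 0)"
  unfolding fiber_def by (auto simp: matvec_diff)

lemma gale_vec_in_kernel:
  assumes "gale_transform m n A b" "i < m"
  shows "matvec n A (gale_vec b w) i = 0"
proof -
  have "matvec n A (gale_vec b w) i =
      (\<Sum>j<n. fst w * (A i j * fst (b j)) + snd w * (A i j * snd (b j)))"
    unfolding matvec_def gale_vec_def by (rule sum.cong) (simp_all add: algebra_simps)
  also have "\<dots> = fst w * matvec n A (\<lambda>j. fst (b j)) i + snd w * matvec n A (\<lambda>j. snd (b j)) i"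
    unfolding matvec_def by (simp add: sum.distrib sum_distrib_left)
  also have "\<dots> = 0"
    using assms unfolding gale_transform_def by simp
  finally show ?thesis .
qed

lemma gale_vec_eq_0D:
  assumes "gale_transform m n A b" "\<forall>j<n. gale_vec b w j = 0"
  shows "w = 0"
proof -
  have "fst w = 0 \<and> snd w = 0" using assms unfolding gale_transform_def gale_vec_def by blast
  then show ?thesis by (simp add: prod_eq_iff)
qed

lemma gale_coords_of_kernel_vec:
  assumes "gale_transform m n A b" "\<forall>i<m. matvec n A x i = 0"
  obtains w where "\<forall>j<n. x j = gale_vec b w j"
proof -
  have "\<forall>x. (\<forall>i<m. matvec n A x i = 0) \<longrightarrow>
      (\<exists>k1 k2. \<forall>j<n. x j = k1 * fst (b j) + k2 * snd (b j))"
    using assms(1) unfolding gale_transform_def by (elim conjE)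
  with assms(2) obtain k1 k2 where "\<forall>j<n. x j = k1 * fst (b j) + k2 * snd (b j)" by blast
  then have "\<forall>j<n. x j = gale_vec b (k1, k2) j" by (simp add: gale_vec_def)
  then show thesis by (rule that)
qed

lemma gale_vec_has_negative:
  assumes gale: "gale_transform m n A b"
    and no_pos: "\<forall>u \<in> natvecs n. (\<forall>i<m. matvec n A (\<lambda>j. int (u j)) i = 0) \<longrightarrow> (\<forall>j. u j = 0)"
    and "w \<noteq> 0"
  shows "\<exists>k<n. gale_vec b w k < 0"
proof (rule ccontr)
  assume "\<not> ?thesis"
  then have nonneg: "\<forall>k<n. 0 \<le> gale_vec b w k" by auto
  have "\<forall>i<m. matvec n A (\<lambda>j. int (pos_part n (gale_vec b w) j)) i = 0"
  proof (intro allI impI)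
    fix i assume "i < m"
    have "matvec n A (\<lambda>j. int (pos_part n (gale_vec b w) j)) i = matvec n A (gale_vec b w) i"
      by (rule matvec_cong) (use nonneg in \<open>simp add: pos_part_def\<close>)
    with gale_vec_in_kernel[OF gale \<open>i < m\<close>]
    show "matvec n A (\<lambda>j. int (pos_part n (gale_vec b w) j)) i = 0" by simp
  qed
  with no_pos have "\<forall>j. pos_part n (gale_vec b w) j = 0" by simp
  with nonneg have "\<forall>j<n. gale_vec b w j = 0"
    unfolding pos_part_def by (metis nat_0_iff order_antisym_conv)
  with gale_vec_eq_0D[OF gale] \<open>w \<noteq> 0\<close> show False by blast
qed

lemma gale_rows_not_parallel:
  assumes gale: "gale_transform m n A b" and "b i \<noteq> (0, 0)"
  shows "\<exists>k<n. fst (b i) * snd (b k) \<noteq> snd (b i) * fst (b k)"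
proof (rule ccontr)
  assume "\<not> ?thesis"
  then have "\<forall>k<n. gale_vec b (- snd (b i), fst (b i)) k = 0"
    unfolding gale_vec_def by (simp add: algebra_simps)
  then have "(- snd (b i), fst (b i)) = 0" by (rule gale_vec_eq_0D[OF gale])
  with \<open>b i \<noteq> (0, 0)\<close> show False by (cases "b i") (simp add: zero_prod_def)
qed

lemma toric_binomial_pos_neg_part:
  assumes ker: "\<forall>i<m. matvec n A x i = 0" and "k < n" "x k \<noteq> 0"
  shows "toric_binomial m n A (pos_part n x) (neg_part n x)"
proof -
  have "pos_part n x \<noteq> neg_part n x"
    using pos_part_minus_neg_part[OF \<open>k < n\<close>, of x] \<open>x k \<noteq> 0\<close> by auto
  moreover have "matvec n A (\<lambda>j. int (pos_part n x j) - int (neg_part n x j)) i = matvec n A x i"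
    for i
    by (rule matvec_cong) (simp add: pos_part_minus_neg_part)
  ultimately show ?thesis
    unfolding toric_binomial_def mem_fiber_iff using ker by simp
qed

lemma conformal_below_pos_neg_part:
  assumes le: "u \<le> pos_part n x" "v \<le> neg_part n x"
    and mult: "\<forall>j<n. int (u j) - int (v j) = s * x j" and "k < n" "x k \<noteq> 0"
  shows "u = v \<or> (u = pos_part n x \<and> v = neg_part n x)"
proof -
  have le_j: "u j \<le> pos_part n x j" "v j \<le> neg_part n x j" for j
    using le by (simp_all add: le_funD)
  have diff_k: "int (u k) - int (v k) = s * x k" using mult \<open>k < n\<close> by simp
  have "0 \<le> s \<and> s \<le> 1"
  proof (cases "0 < x k")
    case True
    then have "v k = 0" using le_j[of k] \<open>k < n\<close> unfolding neg_part_def by simp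
    moreover have "u k \<le> x k"
      using True le_j[of k] \<open>k < n\<close> unfolding pos_part_def by (simp add: le_nat_iff)
    ultimately have "0 \<le> s * x k" "s * x k \<le> 1 * x k" using diff_k by simp_all
    with True show ?thesis by (simp add: zero_le_mult_iff mult_le_cancel_right)
  next
    case False
    then have "u k = 0" using le_j[of k] \<open>k < n\<close> unfolding pos_part_def by simp
    moreover have "v k \<le> - x k"
      using False le_j[of k] \<open>k < n\<close> unfolding neg_part_def by (simp add: le_nat_iff)
    ultimately have "s * x k \<le> 0" "1 * x k \<le> s * x k" using diff_k by simp_all
    moreover have "x k < 0" using False \<open>x k \<noteq> 0\<close> by simp
    ultimately show ?thesis by (simp only: mult_le_cancel_right mult_le_0_iff) auto
  qed
  then have "s = 0 \<or> s = 1" by auto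
  then show ?thesis
  proof
    assume "s = 0"
    have "u j = v j" for j
    proof (cases "j < n")
      case True
      then show ?thesis using mult \<open>s = 0\<close> by simp
    next
      case False
      then show ?thesis using le_j[of j] unfolding pos_part_def neg_part_def by simp
    qed
    then show ?thesis by (simp add: fun_eq_iff)
  next
    assume "s = 1"
    have "u j = pos_part n x j \<and> v j = neg_part n x j" for j
    proof (cases "j < n")
      case True
      then have "int (u j) - int (v j) = x j" using mult \<open>s = 1\<close> by simp
      with le_j[of j] True show ?thesis unfolding pos_part_def neg_part_def by simp linarith
    next
      case False
      then show ?thesis using le_j[of j] unfolding pos_part_def neg_part_def by simp
    qed
    then show ?thesis by (simp add: fun_eq_iff)
  qed
qed

lemma pos_neg_part_in_graver:
  assumes ker: "\<forall>i<m. matvec n A x i = 0" and "k < n" "x k \<noteq> 0" and "x j = 0"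
    and mult: "\<And>y. \<forall>i<m. matvec n A y i = 0 \<Longrightarrow> y j = 0 \<Longrightarrow> \<exists>s. \<forall>l<n. y l = s * x l"
  shows "(pos_part n x, neg_part n x) \<in> graver m n A"
proof -
  have "\<not> (\<exists>u v. (u, v) \<noteq> (pos_part n x, neg_part n x) \<and> toric_binomial m n A u v \<and>
      u \<le> pos_part n x \<and> v \<le> neg_part n x)"
  proof
    assume "\<exists>u v. (u, v) \<noteq> (pos_part n x, neg_part n x) \<and> toric_binomial m n A u v \<and>
      u \<le> pos_part n x \<and> v \<le> neg_part n x"
    then obtain u v where ne: "(u, v) \<noteq> (pos_part n x, neg_part n x)"
      and tb: "toric_binomial m n A u v" and le: "u \<le> pos_part n x" "v \<le> neg_part n x"
      by blast
    have "u \<noteq> v" and ker_uv: "\<forall>i<m. matvec n A (\<lambda>l. int (u l) - int (v l)) i = 0"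
      using tb unfolding toric_binomial_def mem_fiber_iff by auto
    have "u j = 0" "v j = 0"
      using le_funD[OF le(1), of j] le_funD[OF le(2), of j] \<open>x j = 0\<close>
      unfolding pos_part_def neg_part_def by (simp_all split: if_splits)
    then obtain s where "\<forall>l<n. int (u l) - int (v l) = s * x l"
      using mult[OF ker_uv] by auto
    from conformal_below_pos_neg_part[OF le this \<open>k < n\<close> \<open>x k \<noteq> 0\<close>] ne \<open>u \<noteq> v\<close> show False by auto
  qed
  with toric_binomial_pos_neg_part[OF ker \<open>k < n\<close> \<open>x k \<noteq> 0\<close>] show ?thesis
    unfolding graver_def by simp
qed

lemma indispensable_kernel_below:
  assumes ind: "(u, v) \<in> indispensables m n A"
    and ker: "\<forall>i<m. matvec n A y i = 0" and below: "\<forall>j<n. y j \<le> int (u j)"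
  shows "(\<forall>j<n. y j = 0) \<or> (\<forall>j<n. y j = int (u j) - int (v j))"
proof -
  define z where "z j = (if j < n then nat (int (u j) - y j) else 0)" for j
  have z_int: "int (z j) = int (u j) - y j" if "j < n" for j
    using below that by (simp add: z_def)
  have "z \<in> fiber m n A u"
    unfolding mem_fiber_iff
  proof
    show "z \<in> natvecs n" by (simp add: natvecs_def z_def)
    have "matvec n A (\<lambda>j. int (u j) - int (z j)) i = matvec n A y i" for i
      by (rule matvec_cong) (simp add: z_int)
    with ker show "\<forall>i<m. matvec n A (\<lambda>j. int (u j) - int (z j)) i = 0" by simp
  qed
  moreover have "fiber m n A u = {u, v}" using ind unfolding indispensables_def by simp
  ultimately have "z = u \<or> z = v" by simp
  then show ?thesis using z_int by auto
qed

lemma strongly_robust_kernel_below_circuit: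
  assumes gale: "gale_transform m n A b" and sr: "strongly_robust m n A"
    and "i < n" and "c \<noteq> 0" and c_i: "gale_vec b c i = 0"
    and circ: "\<And>w. gale_vec b w i = 0 \<Longrightarrow> \<exists>s. w = (s * fst c, s * snd c)"
    and below: "\<forall>l<n. gale_vec b y l \<le> max (gale_vec b c l) 0"
  shows "y = 0 \<or> y = c"
proof -
  let ?x = "gale_vec b c"
  have ker: "\<forall>i<m. matvec n A (gale_vec b w) i = 0" for w
    using gale_vec_in_kernel[OF gale] by blast
  obtain k where "k < n" "?x k \<noteq> 0"
    using gale_vec_eq_0D[OF gale] \<open>c \<noteq> 0\<close> by blast
  have mult: "\<exists>s. \<forall>l<n. z l = s * ?x l" if ker_z: "\<forall>i<m. matvec n A z i = 0" and "z i = 0" for z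
  proof -
    obtain w where w: "\<forall>l<n. z l = gale_vec b w l"
      using gale_coords_of_kernel_vec[OF gale ker_z] by blast
    with \<open>z i = 0\<close> \<open>i < n\<close> obtain s where "w = (s * fst c, s * snd c)"
      using circ by metis
    with w show ?thesis by (auto simp: gale_vec_def algebra_simps)
  qed
  have "(pos_part n ?x, neg_part n ?x) \<in> indispensables m n A"
    using pos_neg_part_in_graver[OF ker \<open>k < n\<close> \<open>?x k \<noteq> 0\<close> c_i mult] sr
    unfolding strongly_robust_def by simp
  moreover have "\<forall>l<n. gale_vec b y l \<le> int (pos_part n ?x l)"
    using below by (auto simp: pos_part_def max_def split: if_splits)
  ultimately have "(\<forall>l<n. gale_vec b y l = 0) \<or> (\<forall>l<n. gale_vec b y l = ?x l)"
    using indispensable_kernel_below[OF _ ker] pos_part_minus_neg_part by metis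
  then show ?thesis
  proof
    assume "\<forall>l<n. gale_vec b y l = 0"
    then show ?thesis using gale_vec_eq_0D[OF gale] by blast
  next
    assume "\<forall>l<n. gale_vec b y l = ?x l"
    then have "\<forall>l<n. gale_vec b (y - c) l = 0" by (simp add: gale_vec_def algebra_simps)
    then have "y - c = 0" by (rule gale_vec_eq_0D[OF gale])
    then show ?thesis by simp
  qed
qed

lemma exists_least_clearing_shift:
  fixes a d :: "'i \<Rightarrow> int"
  assumes "finite K" "K \<noteq> {}" "\<forall>k\<in>K. a k < 0"
  shows "\<exists>t. (\<forall>k\<in>K. d k + t * a k \<le> 0) \<and> (\<exists>k\<in>K. 0 < d k + (t - 1) * a k)"
proof -
  define f where "f k = - ((- d k) div (- a k))" for k
  have f_ge: "d k \<le> f k * (- a k)" and f_lt: "f k * (- a k) < d k - a k" if "k \<in> K" for k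
  proof -
    have pos: "0 < - a k" using assms(3) that by simp
    have "- d k = (- d k) div (- a k) * (- a k) + (- d k) mod (- a k)"
      by (rule div_mult_mod_eq[symmetric])
    moreover have "0 \<le> (- d k) mod (- a k)" "(- d k) mod (- a k) < - a k"
      using pos by (rule pos_mod_sign, rule pos_mod_bound)
    ultimately show "d k \<le> f k * (- a k)" "f k * (- a k) < d k - a k" unfolding f_def by linarith+
  qed
  define t where "t = Max (f ` K)"
  have "t \<in> f ` K" using assms(1,2) unfolding t_def by (intro Max_in) auto
  then obtain k0 where "k0 \<in> K" "t = f k0" by blast
  show ?thesis
  proof (intro exI conjI ballI bexI)
    fix k assume "k \<in> K"
    have "d k \<le> f k * (- a k)" using f_ge[OF \<open>k \<in> K\<close>] .
    also have "\<dots> \<le> t * (- a k)"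
      using \<open>k \<in> K\<close> assms by (intro mult_right_mono) (auto simp: t_def less_imp_le)
    finally show "d k + t * a k \<le> 0" by simp
  next
    show "0 < d k0 + (t - 1) * a k0" using f_lt[OF \<open>k0 \<in> K\<close>] \<open>t = f k0\<close> by (simp add: algebra_simps)
  qed (fact \<open>k0 \<in> K\<close>)
qed

lemma exists_cancelling_combination:
  fixes a d :: "'i \<Rightarrow> int"
  assumes "finite I" and neg: "\<exists>k\<in>I. a k < 0"
    and escape: "\<forall>t. \<exists>l\<in>I. max (a l) 0 < d l + t * a l"
  shows "\<exists>l\<in>I. \<exists>l'\<in>I. \<exists>\<alpha> \<alpha>'. 0 \<le> \<alpha> \<and> 0 \<le> \<alpha>' \<and> 0 < \<alpha> + \<alpha>' \<and>
           \<alpha> * a l + \<alpha>' * a l' = 0 \<and> \<alpha> + \<alpha>' \<le> \<alpha> * d l + \<alpha>' * d l'"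
proof (cases "\<exists>l\<in>I. a l = 0 \<and> 0 < d l")
  case True
  then obtain l where "l \<in> I" "a l = 0" "0 < d l" by blast
  then show ?thesis by (intro bexI[of _ l] exI[of _ 1] exI[of _ 0]) auto
next
  case False
  define K where "K = {k \<in> I. a k < 0}"
  have "finite K" "K \<noteq> {}" "\<forall>k\<in>K. a k < 0"
    using assms(1) neg unfolding K_def by auto
  from exists_least_clearing_shift[OF this, of d]
  obtain t where clear: "\<forall>k\<in>K. d k + t * a k \<le> 0" and "\<exists>k\<in>K. 0 < d k + (t - 1) * a k"
    by blast
  then obtain k where k: "k \<in> I" "a k < 0" "0 < d k + (t - 1) * a k"
    unfolding K_def by blast
  obtain j where j: "j \<in> I" "max (a j) 0 < d j + t * a j"
    using escape by blast
  have "0 < a j"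
  proof -
    have "a j \<noteq> 0" using False j by auto
    moreover have "\<not> a j < 0"
    proof
      assume "a j < 0"
      then have "d j + t * a j \<le> 0" using clear j(1) unfolding K_def by blast
      with j(2) show False by simp
    qed
    ultimately show ?thesis by simp
  qed
  have "- a k * (a j + 1) \<le> - a k * (d j + t * a j)"
    using j(2) k(2) by (intro mult_left_mono) auto
  moreover have "a j * (1 + a k) \<le> a j * (d k + t * a k)"
    using k(3) \<open>0 < a j\<close> by (intro mult_left_mono) (auto simp: algebra_simps)
  ultimately have "- a k + a j \<le> - a k * d j + a j * d k"
    by (simp add: algebra_simps)
  moreover have "- a k * a j + a j * a k = 0" by simp
  moreover have "0 \<le> - a k" "0 \<le> a j" "0 < - a k + a j" using k(2) \<open>0 < a j\<close> by simp_all
  ultimately show ?thesis using j(1) k(1) by blast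
qed

lemma neg_mem_convex_if_far_neg_multiple:
  fixes v :: "'a::real_vector"
  assumes "convex C" "v \<in> C" "- (c *\<^sub>R v) \<in> C" "1 \<le> c"
  shows "- v \<in> C"
proof -
  have "2 / (1 + c) \<le> 1" using assms(4) by simp
  then have "(2 / (1 + c)) *\<^sub>R (- (c *\<^sub>R v)) + (1 - 2 / (1 + c)) *\<^sub>R v \<in> C"
    using assms by (intro convexD) auto
  also have "(2 / (1 + c)) *\<^sub>R (- (c *\<^sub>R v)) + (1 - 2 / (1 + c)) *\<^sub>R v
      = (- (2 / (1 + c) * c) + (1 - 2 / (1 + c))) *\<^sub>R v"
    by (simp add: scaleR_add_left scaleR_diff_left)
  also have "- (2 / (1 + c) * c) + (1 - 2 / (1 + c)) = -1"
    using assms(4) by (simp add: divide_simps)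
  finally show ?thesis by simp
qed

definition rot90 :: "int \<times> int \<Rightarrow> real \<times> real" where
  "rot90 v = (- of_int (snd v), of_int (fst v))"

lemma reduced_gale_eq_rot90:
  "reduced_gale v = rot90 (fst v div gcd (fst v) (snd v), snd v div gcd (fst v) (snd v))"
  unfolding reduced_gale_def rot90_def Let_def by (simp add: dvd_neg_div)

lemma neg_rot90_in_hull_of_combination:
  fixes S :: "(int \<times> int) set" and \<alpha> \<alpha>' E :: int
  assumes "x \<in> S" "y \<in> S" "v \<in> S" "0 \<le> \<alpha>" "0 \<le> \<alpha>'" "0 < \<alpha> + \<alpha>'" "\<alpha> + \<alpha>' \<le> E"
    and comb_fst: "\<alpha> * fst x + \<alpha>' * fst y = - E * fst v"
    and comb_snd: "\<alpha> * snd x + \<alpha>' * snd y = - E * snd v"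
  shows "- rot90 v \<in> convex hull (rot90 ` S)"
proof -
  define s where "s = real_of_int (\<alpha> + \<alpha>')"
  have "0 < s" using assms(6) by (simp add: s_def)
  have "(\<alpha> / s) *\<^sub>R rot90 x + (\<alpha>' / s) *\<^sub>R rot90 y \<in> convex hull (rot90 ` S)"
    using assms(1,2,4,5) \<open>0 < s\<close>
    by (intro convexD[OF convex_convex_hull] hull_inc)
      (auto simp: s_def add_divide_distrib[symmetric])
  moreover have "(\<alpha> / s) *\<^sub>R rot90 x + (\<alpha>' / s) *\<^sub>R rot90 y = - ((E / s) *\<^sub>R rot90 v)"
  proof -
    have "real_of_int \<alpha> * fst x + real_of_int \<alpha>' * fst y = - E * fst v"
      "real_of_int \<alpha> * snd x + real_of_int \<alpha>' * snd y = - E * snd v"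
      using arg_cong[OF comb_fst, of real_of_int] arg_cong[OF comb_snd, of real_of_int] by simp_all
    with \<open>0 < s\<close> show ?thesis
      unfolding rot90_def by (simp add: prod_eq_iff field_simps)
  qed
  moreover have "1 \<le> E / s" using assms(7) \<open>0 < s\<close> by (simp add: s_def)
  moreover have "rot90 v \<in> convex hull (rot90 ` S)" using assms(3) by (intro hull_inc) simp
  ultimately show ?thesis
    using neg_mem_convex_if_far_neg_multiple[OF convex_convex_hull] by metis
qed

lemma rot90_not_collinear:
  assumes "fst v * snd w \<noteq> snd v * fst w"
  shows "\<not> collinear {0, rot90 v, rot90 w}"
proof
  assume "collinear {0, rot90 v, rot90 w}"
  then consider "rot90 v = 0" | "rot90 w = 0" | c where "rot90 w = c *\<^sub>R rot90 v"
    unfolding collinear_lemma by blast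
  then show False
  proof cases
    case 3
    then have "real_of_int (snd w) = c * snd v" "real_of_int (fst w) = c * fst v"
      unfolding rot90_def by (simp_all add: prod_eq_iff)
    then have "real_of_int (fst v * snd w) = real_of_int (snd v * fst w)" by simp
    with assms show False by linarith
  qed (use assms in \<open>simp_all add: rot90_def prod_eq_iff\<close>)
qed

lemma aff_dim_eq_2_if_not_collinear:
  fixes C :: "(real \<times> real) set"
  assumes "convex C" "x \<in> C" "- x \<in> C" "y \<in> C" "\<not> collinear {0, x, y}"
  shows "aff_dim C = 2"
proof -
  have "(1 / 2) *\<^sub>R x + (1 / 2) *\<^sub>R (- x) \<in> C"
    using assms(1-3) by (rule convexD) auto
  then have "0 \<in> C" by simp
  with assms(2,4,5) have "\<not> collinear C" using collinear_subset[of C "{0, x, y}"] by blast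
  then have "1 < aff_dim C" by (simp add: collinear_aff_dim)
  moreover have "aff_dim C \<le> 2" using aff_dim_le_DIM[of C] by simp
  ultimately show ?thesis by simp
qed

lemma convex_hull_eq_uminus_image:
  fixes S :: "'a::real_vector set"
  assumes "uminus ` S \<subseteq> convex hull S"
  shows "convex hull S = uminus ` (convex hull S)"
proof -
  have neg_sub: "uminus ` (convex hull S) \<subseteq> convex hull S"
  proof -
    have "uminus ` (convex hull S) = convex hull (uminus ` S)"
      by (rule convex_hull_linear_image) (rule linear_uminus)
    also have "\<dots> \<subseteq> convex hull S"
      using assms by (intro hull_minimal) (simp_all add: convex_convex_hull)
    finally show ?thesis .
  qed
  moreover have "convex hull S \<subseteq> uminus ` (convex hull S)"
  proof
    fix x assume "x \<in> convex hull S"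
    then have "- x \<in> convex hull S" using neg_sub by blast
    then show "x \<in> uminus ` (convex hull S)" by (rule rev_image_eqI) simp
  qed
  ultimately show ?thesis by blast
qed

lemma orthogonal_to_primitive:
  fixes p q \<mu> \<nu> w1 w2 :: int
  assumes bez: "p * \<mu> + q * \<nu> = -1" and orth: "w1 * p + w2 * q = 0"
  shows "w1 = (w1 * \<nu> - w2 * \<mu>) * - q" "w2 = (w1 * \<nu> - w2 * \<mu>) * p"
proof -
  have "(w1 * \<nu> - w2 * \<mu>) * - q = - w1 * (p * \<mu> + q * \<nu>) + \<mu> * (w1 * p + w2 * q)"
    "(w1 * \<nu> - w2 * \<mu>) * p = - w2 * (p * \<mu> + q * \<nu>) + \<nu> * (w1 * p + w2 * q)"
    by (simp_all add: algebra_simps)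
  with bez orth show "w1 = (w1 * \<nu> - w2 * \<mu>) * - q" "w2 = (w1 * \<nu> - w2 * \<mu>) * p"
    by simp_all
qed

lemma coordinates_wrt_primitive:
  fixes p q \<mu> \<nu> x1 x2 :: int
  assumes "p * \<mu> + q * \<nu> = -1"
  shows "x1 = - (x1 * \<mu> + x2 * \<nu>) * p + (p * x2 - q * x1) * \<nu>"
    "x2 = - (x1 * \<mu> + x2 * \<nu>) * q - (p * x2 - q * x1) * \<mu>"
proof -
  have "- (x1 * \<mu> + x2 * \<nu>) * p + (p * x2 - q * x1) * \<nu> = - x1 * (p * \<mu> + q * \<nu>)"
    "- (x1 * \<mu> + x2 * \<nu>) * q - (p * x2 - q * x1) * \<mu> = - x2 * (p * \<mu> + q * \<nu>)"
    by (simp_all add: algebra_simps)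
  with assms show "x1 = - (x1 * \<mu> + x2 * \<nu>) * p + (p * x2 - q * x1) * \<nu>"
    "x2 = - (x1 * \<mu> + x2 * \<nu>) * q - (p * x2 - q * x1) * \<mu>"
    by simp_all
qed

lemma strongly_robust_escape:
  fixes b \<beta> :: "nat \<Rightarrow> int \<times> int" and g :: "nat \<Rightarrow> int" and i :: nat and \<mu> \<nu> t :: int
  defines "a l \<equiv> fst (\<beta> i) * snd (\<beta> l) - snd (\<beta> i) * fst (\<beta> l)"
    and "d l \<equiv> fst (\<beta> l) * \<mu> + snd (\<beta> l) * \<nu>"
  assumes gale: "gale_transform m n A b" and sr: "strongly_robust m n A"
    and b_eq: "\<And>l. b l = (g l * fst (\<beta> l), g l * snd (\<beta> l))" and g_pos: "\<And>l. l < n \<Longrightarrow> 0 < g l"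
    and "i < n" and bez: "fst (\<beta> i) * \<mu> + snd (\<beta> i) * \<nu> = -1"
  shows "\<exists>l<n. max (a l) 0 < d l + t * a l"
proof (rule ccontr)
  assume "\<not> ?thesis"
  obtain p q where \<beta>_i: "\<beta> i = (p, q)" by (cases "\<beta> i")
  have gale_vec_\<beta>: "gale_vec b w l = g l * (fst w * fst (\<beta> l) + snd w * snd (\<beta> l))" for w l
    by (simp add: gale_vec_def b_eq algebra_simps)
  have "(- q, p) \<noteq> 0" using bez \<beta>_i by (auto simp: zero_prod_def)
  have c_i: "gale_vec b (- q, p) i = 0" unfolding gale_vec_\<beta> \<beta>_i by simp
  have circ: "\<exists>s. w = (s * fst (- q, p), s * snd (- q, p))" if "gale_vec b w i = 0" for w
  proof -
    have "fst w * p + snd w * q = 0"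
      using that g_pos[OF \<open>i < n\<close>] unfolding gale_vec_\<beta> \<beta>_i by simp
    from orthogonal_to_primitive[OF bez[unfolded \<beta>_i fst_conv snd_conv] this]
    show ?thesis by (intro exI) (simp add: prod_eq_iff)
  qed
  \<comment> \<open>(\<mu>, \<nu>) + t (-q, p) runs through the lattice points y with y \<bullet> \<beta> i = -1.\<close>
  from \<open>\<not> ?thesis\<close> have "\<forall>l<n. g l * (d l + t * a l) \<le> g l * max (a l) 0"
    using g_pos by (meson less_imp_le mult_left_mono not_less)
  then have "\<forall>l<n. gale_vec b (\<mu> - t * q, \<nu> + t * p) l \<le> max (gale_vec b (- q, p) l) 0"
    using g_pos unfolding gale_vec_\<beta> a_def d_def \<beta>_i
    by (auto simp: algebra_simps max_def mult_le_0_iff split: if_splits)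
  from strongly_robust_kernel_below_circuit[OF gale sr \<open>i < n\<close> \<open>(- q, p) \<noteq> 0\<close> c_i circ this]
  have "gale_vec b (\<mu> - t * q, \<nu> + t * p) i = 0"
    using c_i by (auto simp: gale_vec_def zero_prod_def)
  moreover have "gale_vec b (\<mu> - t * q, \<nu> + t * p) i = g i * (p * \<mu> + q * \<nu>)"
    unfolding gale_vec_\<beta> \<beta>_i by (simp add: algebra_simps)
  ultimately show False using g_pos[OF \<open>i < n\<close>] bez \<beta>_i by simp
qed

lemma neg_rot90_in_hull_if_escaping:
  fixes \<beta> :: "'i \<Rightarrow> int \<times> int" and i :: 'i and \<mu> \<nu> :: int
  defines "a l \<equiv> fst (\<beta> i) * snd (\<beta> l) - snd (\<beta> i) * fst (\<beta> l)"
    and "d l \<equiv> fst (\<beta> l) * \<mu> + snd (\<beta> l) * \<nu>"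
  assumes "finite I" "i \<in> I" and bez: "fst (\<beta> i) * \<mu> + snd (\<beta> i) * \<nu> = -1"
    and neg: "\<exists>k\<in>I. a k < 0" and escape: "\<forall>t. \<exists>l\<in>I. max (a l) 0 < d l + t * a l"
  shows "- rot90 (\<beta> i) \<in> convex hull (rot90 ` \<beta> ` I)"
proof -
  obtain l l' \<alpha> \<alpha>' where "l \<in> I" "l' \<in> I" "0 \<le> \<alpha>" "0 \<le> \<alpha>'" "0 < \<alpha> + \<alpha>'"
    and cancel: "\<alpha> * a l + \<alpha>' * a l' = 0" and far: "\<alpha> + \<alpha>' \<le> \<alpha> * d l + \<alpha>' * d l'"
    using exists_cancelling_combination[OF \<open>finite I\<close> neg escape] by blast
  \<comment> \<open>(d j, a j) are the coordinates of \<beta> j in the lattice basis (- \<beta> i, (\<nu>, - \<mu>)) of \<int> \<times> \<int>.\<close>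
  have coord: "fst (\<beta> j) = - d j * fst (\<beta> i) + a j * \<nu>"
    "snd (\<beta> j) = - d j * snd (\<beta> i) - a j * \<mu>" for j
    unfolding a_def d_def by (fact coordinates_wrt_primitive[OF bez])+
  have "\<alpha> * fst (\<beta> l) + \<alpha>' * fst (\<beta> l') =
      - (\<alpha> * d l + \<alpha>' * d l') * fst (\<beta> i) + (\<alpha> * a l + \<alpha>' * a l') * \<nu>"
    "\<alpha> * snd (\<beta> l) + \<alpha>' * snd (\<beta> l') =
      - (\<alpha> * d l + \<alpha>' * d l') * snd (\<beta> i) - (\<alpha> * a l + \<alpha>' * a l') * \<mu>"
    by (subst (1 2) coord, simp add: algebra_simps)+
  with cancel \<open>l \<in> I\<close> \<open>l' \<in> I\<close> \<open>i \<in> I\<close> \<open>0 \<le> \<alpha>\<close> \<open>0 \<le> \<alpha>'\<close> \<open>0 < \<alpha> + \<alpha>'\<close> far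
  show ?thesis
    by (intro neg_rot90_in_hull_of_combination[where x = "\<beta> l" and y = "\<beta> l'"
          and E = "\<alpha> * d l + \<alpha>' * d l'"]) auto
qed

lemma neg_rot90_primitive_row_in_hull:
  fixes b \<beta> :: "nat \<Rightarrow> int \<times> int" and g :: "nat \<Rightarrow> int"
  assumes gale: "gale_transform m n A b"
    and no_pos: "\<forall>u \<in> natvecs n. (\<forall>i<m. matvec n A (\<lambda>j. int (u j)) i = 0) \<longrightarrow> (\<forall>j. u j = 0)"
    and sr: "strongly_robust m n A"
    and b_eq: "\<And>l. b l = (g l * fst (\<beta> l), g l * snd (\<beta> l))" and g_pos: "\<And>l. l < n \<Longrightarrow> 0 < g l"
    and "i < n" and "coprime (fst (\<beta> i)) (snd (\<beta> i))"
  shows "- rot90 (\<beta> i) \<in> convex hull (rot90 ` \<beta> ` {..<n})"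
proof -
  obtain u1 w1 where "u1 * fst (\<beta> i) + w1 * snd (\<beta> i) = 1"
    using bezout_int[of "fst (\<beta> i)" "snd (\<beta> i)"] \<open>coprime (fst (\<beta> i)) (snd (\<beta> i))\<close> by auto
  then have bez: "fst (\<beta> i) * - u1 + snd (\<beta> i) * - w1 = -1" by (simp add: algebra_simps)
  have "(- snd (\<beta> i), fst (\<beta> i)) \<noteq> 0" using bez by (auto simp: zero_prod_def)
  then obtain k where "k < n" "gale_vec b (- snd (\<beta> i), fst (\<beta> i)) k < 0"
    using gale_vec_has_negative[OF gale no_pos] by blast
  define a where "a l = fst (\<beta> i) * snd (\<beta> l) - snd (\<beta> i) * fst (\<beta> l)" for l
  define d where "d l = fst (\<beta> l) * - u1 + snd (\<beta> l) * - w1" for l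
  have "\<exists>k\<in>{..<n}. a k < 0"
    using \<open>k < n\<close> \<open>gale_vec b _ k < 0\<close> g_pos unfolding gale_vec_def b_eq a_def
    by (auto simp: mult_less_0_iff algebra_simps)
  moreover have "\<forall>t. \<exists>l\<in>{..<n}. max (a l) 0 < d l + t * a l"
    using strongly_robust_escape[OF gale sr b_eq g_pos \<open>i < n\<close> bez] unfolding a_def d_def by blast
  ultimately show ?thesis
    using \<open>i < n\<close> neg_rot90_in_hull_if_escaping[where \<beta> = \<beta> and i = i and \<mu> = "- u1"
        and \<nu> = "- w1" and I = "{..<n}", OF finite_lessThan _ bez]
    unfolding a_def d_def by blast
qed

theorem theorem1p1:
  fixes n :: nat and A :: "nat \<Rightarrow> nat \<Rightarrow> int" and b :: "nat \<Rightarrow> int \<times> int"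
  assumes "n \<ge> 2"
    and "full_row_rank (n - 2) n A"
    and "\<forall>u \<in> natvecs n. (\<forall>i<n - 2. matvec n A (\<lambda>j. int (u j)) i = 0) \<longrightarrow> (\<forall>j. u j = 0)"
    and "gale_transform (n - 2) n A b"
    and "\<forall>i<n. b i \<noteq> (0, 0)"
    and "strongly_robust (n - 2) n A"
  shows "aff_dim (convex hull ((\<lambda>i. reduced_gale (b i)) ` {..<n})) = 2 \<and>
         convex hull ((\<lambda>i. reduced_gale (b i)) ` {..<n}) = uminus ` (convex hull ((\<lambda>i. reduced_gale (b i)) ` {..<n}))"
proof -
  define g where "g l = gcd (fst (b l)) (snd (b l))" for l
  define \<beta> where "\<beta> l = (fst (b l) div g l, snd (b l) div g l)" for l
  define R where "R = rot90 ` \<beta> ` {..<n}"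
  have b_eq: "b l = (g l * fst (\<beta> l), g l * snd (\<beta> l))" for l
    by (simp add: g_def \<beta>_def)
  have g_pos: "0 < g l" if "l < n" for l
    using assms(5) that by (cases "b l") (auto simp: g_def)
  have "coprime (fst (\<beta> l)) (snd (\<beta> l))" if "l < n" for l
    using assms(5) that div_gcd_coprime[of "fst (b l)" "snd (b l)"]
    by (cases "b l") (auto simp: \<beta>_def g_def)
  then have neg_sub: "uminus ` R \<subseteq> convex hull R"
    using neg_rot90_primitive_row_in_hull[OF assms(4,3,6) b_eq g_pos] by (auto simp: R_def)
  obtain k where "k < n" "fst (b 0) * snd (b k) \<noteq> snd (b 0) * fst (b k)"
    using gale_rows_not_parallel[OF assms(4), of 0] assms(1,5) by auto
  then have "\<not> collinear {0, rot90 (\<beta> 0), rot90 (\<beta> k)}"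
    by (intro rot90_not_collinear) (auto simp: b_eq[of 0] b_eq[of k] algebra_simps)
  moreover have "rot90 (\<beta> 0) \<in> R" "rot90 (\<beta> k) \<in> R" using assms(1) \<open>k < n\<close> by (auto simp: R_def)
  ultimately have "aff_dim (convex hull R) = 2"
    using neg_sub by (intro aff_dim_eq_2_if_not_collinear[of _ "rot90 (\<beta> 0)" "rot90 (\<beta> k)"])
      (auto intro: hull_inc)
  moreover have "(\<lambda>i. reduced_gale (b i)) ` {..<n} = R"
    by (auto simp: R_def \<beta>_def g_def reduced_gale_eq_rot90)
  ultimately show ?thesis using convex_hull_eq_uminus_image[OF neg_sub] by simp
qed

end
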